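(* Let $\alpha\in\mathbb{R}$ not be a negative integer, let $n\in\mathbb{N}=\{1,2,\dots\}$ and $0\le i\le n-1$. Then on $(0,\infty)$ the function $$t\mapsto \sum_{k=0}^i\frac{(-1)^k}{(i-k)!}\,t^{i-k}\,\ell_{n-1-k}^{(\alpha+1+k)}(t)$$ is an antiderivative of $t\mapsto \frac{t^i}{i!}\ell_n^{(\alpha)}(t)$, i.e. $\int \frac{t^i}{i!}\ell_n^{(\alpha)}(t)\,dt=\sum_{k=0}^i\frac{(-1)^k}{(i-k)!}t^{i-k}\ell_{n-1-k}^{(\alpha+1+k)}(t)$.
   Context: The generalized Laguerre polynomials are $L_n^{(\alpha)}(t)=\sum_{k=0}^n(-1)^k\binom{n+\alpha}{n-k}\frac{t^k}{k!}$, and the Laguerre functions are $\ell_n^{(\alpha)}(t)=\frac{n!}{\Gamma(n+\alpha+1)}t^{\alpha}e^{-t}L_n^{(\alpha)}(t)$ for $t>0$ (defined for $\alpha\neq-1,-2,\dots$). *)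

theory Defs
  imports "HOL-Analysis.Analysis"
begin

definition laguerre :: "nat \<Rightarrow> real \<Rightarrow> real \<Rightarrow> real" where
  "laguerre n a t = (\<Sum>k=0..n. (-1)^k * ((real n + a) gchoose (n - k)) * t^k / fact k)"

definition laguerre_fun :: "nat \<Rightarrow> real \<Rightarrow> real \<Rightarrow> real" where
  "laguerre_fun n a t = fact n / Gamma (real n + a + 1) * t powr a * exp (- t) * laguerre n a t"

end

theory Submission
  imports Defs
begin

text \<open>Differentiating t powr (b+1) * exp(-t) * L_m^(b+1)(t) gives
  t powr b * exp(-t) * ((b + 1 - t) L_m^(b+1)(t) + t L_m^(b+1)'(t)), and comparing coefficients
  (absorption identity for binomial coefficients) shows that the bracket is (m + 1) L_(m+1)^(b)(t).
  After normalisation this says that the derivative of ell_m^(b+1) is ell_(m+1)^(b).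
  By the product rule, the derivative of the k-th summand of the antiderivative is therefore
  the k-th term (-1)^k t^(i-k)/(i-k)! ell_(n-k)^(alpha+k)(t) minus the (k+1)-st one, so the sum
  of the derivatives telescopes to the 0-th term t^i/i! ell_n^(alpha)(t).\<close>

definition laguerre_coeff :: "nat \<Rightarrow> real \<Rightarrow> nat \<Rightarrow> real" where
  "laguerre_coeff n a k = (-1)^k * ((real n + a) gchoose (n - k)) / fact k"

lemma laguerre_eq_sum_coeff: "laguerre n a t = (\<Sum>k=0..n. laguerre_coeff n a k * t^k)"
  unfolding laguerre_def laguerre_coeff_def by (simp add: algebra_simps)

lemma laguerre_coeff_Suc:
  assumes "j \<le> Suc m"
  shows "(real m + 1) * laguerre_coeff (Suc m) \<beta> j
       = (\<beta> + 1 + real j) * (if j \<le> m then laguerre_coeff m (\<beta> + 1) j else 0)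
         - (if j = 0 then 0 else laguerre_coeff m (\<beta> + 1) (j - 1))"
proof -
  define x where "x = real m + \<beta> + 1"
  have absorb: "real (Suc r) * (x gchoose Suc r) = (x - real r) * (x gchoose r)" for r
    using gbinomial_mult_1[of x r] by (simp add: algebra_simps)
  consider "j = 0" | "j = Suc m" | j' where "j = Suc j'" "j' < m"
    using assms by (cases j) (auto simp: le_less)
  then show ?thesis
  proof cases
    case 1
    then show ?thesis using absorb[of m] by (simp add: laguerre_coeff_def x_def algebra_simps)
  next
    case 2
    then show ?thesis by (simp add: laguerre_coeff_def fact_Suc divide_simps)
  next
    case 3
    define r where "r = m - j"
    have r: "m = j + r" using 3 unfolding r_def by simp
    have idx: "Suc m - j = Suc r" "m - j = r" "m - (j - 1) = Suc r" using 3 r by auto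
    have key: "(real m + 1) * (x gchoose Suc r)
        = (\<beta> + 1 + real j) * (x gchoose r) + real j * (x gchoose Suc r)"
      using absorb[of r] 3 r by (simp add: x_def algebra_simps)
    have c1: "laguerre_coeff (Suc m) \<beta> j = (-1)^j / fact j * (x gchoose Suc r)"
      unfolding laguerre_coeff_def idx x_def by (simp add: add_ac)
    have c2: "laguerre_coeff m (\<beta> + 1) j = (-1)^j / fact j * (x gchoose r)"
      unfolding laguerre_coeff_def idx x_def by (simp add: add_ac)
    have c3: "laguerre_coeff m (\<beta> + 1) (j - 1) = - ((-1)^j / fact j * (real j * (x gchoose Suc r)))"
      unfolding laguerre_coeff_def idx x_def using 3 by (simp add: fact_Suc add_ac)
    have "(real m + 1) * laguerre_coeff (Suc m) \<beta> j = (-1)^j / fact j * ((real m + 1) * (x gchoose Suc r))"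
      unfolding c1 by simp
    also have "\<dots> = (\<beta> + 1 + real j) * laguerre_coeff m (\<beta> + 1) j - laguerre_coeff m (\<beta> + 1) (j - 1)"
      unfolding key c2 c3 by (simp add: algebra_simps add_divide_distrib)
    finally show ?thesis using 3 by simp
  qed
qed

lemma laguerre_has_derivative:
  "(laguerre n a has_real_derivative (\<Sum>k=0..n. laguerre_coeff n a k * (real k * t^(k - 1)))) (at t)"
  unfolding laguerre_eq_sum_coeff[abs_def]
  by (rule derivative_eq_intros refl | simp add: mult_ac)+

lemma times_deriv_laguerre:
  "t * deriv (laguerre n a) t = (\<Sum>k=0..n. real k * laguerre_coeff n a k * t^k)"
  unfolding DERIV_imp_deriv[OF laguerre_has_derivative] sum_distrib_left
  by (rule sum.cong) (auto simp: power_eq_if)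

lemma laguerre_Suc_recurrence:
  "(real m + 1) * laguerre (Suc m) \<beta> t
     = (\<beta> + 1 - t) * laguerre m (\<beta> + 1) t + t * deriv (laguerre m (\<beta> + 1)) t"
proof -
  define c where "c = laguerre_coeff m (\<beta> + 1)"
  have "(real m + 1) * laguerre (Suc m) \<beta> t
      = (\<Sum>j=0..Suc m. ((\<beta> + 1 + real j) * (if j \<le> m then c j else 0)
                         - (if j = 0 then 0 else c (j - 1))) * t^j)"
    unfolding laguerre_eq_sum_coeff sum_distrib_left c_def
    by (rule sum.cong) (simp_all add: laguerre_coeff_Suc flip: mult.assoc)
  also have "\<dots> = (\<Sum>j=0..m. (\<beta> + 1 + real j) * c j * t^j) - (\<Sum>j=0..m. c j * t^Suc j)"
  proof -
    have "(\<Sum>j=0..Suc m. (if j = 0 then 0 else c (j - 1)) * t^j) = (\<Sum>j=0..m. c j * t^Suc j)"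
      by (simp add: sum.atLeast0_atMost_Suc_shift del: sum.cl_ivl_Suc)
    then show ?thesis by (simp add: sum_subtractf left_diff_distrib)
  qed
  also have "\<dots> = (\<beta> + 1 - t) * laguerre m (\<beta> + 1) t + t * deriv (laguerre m (\<beta> + 1)) t"
    unfolding times_deriv_laguerre laguerre_eq_sum_coeff c_def
    by (simp add: sum_distrib_left algebra_simps sum.distrib sum_subtractf)
  finally show ?thesis .
qed

lemma DERIV_powr_exp_mult:
  fixes b t :: real
  assumes t: "t > 0" and p: "(p has_real_derivative p') (at t)"
  shows "((\<lambda>s. s powr (b + 1) * exp (- s) * p s) has_real_derivative
           t powr b * exp (- t) * ((b + 1 - t) * p t + t * p')) (at t)"
proof -
  have "((\<lambda>s. s powr (b + 1)) has_real_derivative (b + 1) * t powr b) (at t)"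
    using has_real_derivative_powr[OF t, of "b + 1"] by simp
  moreover have "((\<lambda>s. exp (- s)) has_real_derivative - exp (- t)) (at t)"
    by (rule derivative_eq_intros refl)+ simp
  ultimately have "((\<lambda>s. s powr (b + 1) * exp (- s) * p s) has_real_derivative
      ((b + 1) * t powr b * exp (- t) + - exp (- t) * t powr (b + 1)) * p t
      + p' * (t powr (b + 1) * exp (- t))) (at t)"
    by (intro DERIV_mult p)
  moreover have "t powr (b + 1) = t powr b * t"
    using t by (simp add: powr_add)
  ultimately show ?thesis by (simp add: algebra_simps)
qed

lemma laguerre_fun_has_derivative:
  assumes "t > 0"
  shows "(laguerre_fun m (\<beta> + 1) has_real_derivative laguerre_fun (Suc m) \<beta> t) (at t)"
proof -
  define c where "c = fact m / Gamma (real m + \<beta> + 2)"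
  have lf: "laguerre_fun m (\<beta> + 1) = (\<lambda>s. c * (s powr (\<beta> + 1) * exp (- s) * laguerre m (\<beta> + 1) s))"
    unfolding laguerre_fun_def c_def by (simp add: algebra_simps)
  have val: "c * (t powr \<beta> * exp (- t) * ((\<beta> + 1 - t) * laguerre m (\<beta> + 1) t
                                          + t * deriv (laguerre m (\<beta> + 1)) t))
               = laguerre_fun (Suc m) \<beta> t"
    unfolding laguerre_Suc_recurrence[symmetric] laguerre_fun_def c_def
    by (simp add: fact_Suc algebra_simps add_divide_distrib)
  have "(laguerre m (\<beta> + 1) has_real_derivative deriv (laguerre m (\<beta> + 1)) t) (at t)"
    using laguerre_has_derivative DERIV_imp_deriv by metis
  from DERIV_cmult[OF DERIV_powr_exp_mult[OF assms this, of \<beta>], of c]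
  show ?thesis unfolding lf val .
qed

lemma DERIV_power_over_fact_mult:
  fixes t :: real
  assumes "(f has_real_derivative f') (at t)"
  shows "((\<lambda>s. s^p / fact p * f s) has_real_derivative
           (if p = 0 then 0 else t^(p - 1) / fact (p - 1) * f t) + t^p / fact p * f') (at t)"
proof (cases p)
  case 0
  then show ?thesis using assms by simp
next
  case (Suc q)
  have "((\<lambda>s. s^p / fact p) has_real_derivative t^q / fact q) (at t)"
    unfolding Suc by (rule derivative_eq_intros refl | simp)+
  from DERIV_mult[OF this assms] show ?thesis using Suc by (simp add: algebra_simps)
qed

definition laguerre_term :: "nat \<Rightarrow> nat \<Rightarrow> real \<Rightarrow> nat \<Rightarrow> real \<Rightarrow> real" where
  "laguerre_term i n a k t = (-1)^k / fact (i - k) * t^(i - k) * laguerre_fun (n - k) (a + real k) t"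

lemma laguerre_term_has_derivative:
  assumes t: "t > 0" and "k \<le> m"
  shows "(laguerre_term i m (a + 1) k has_real_derivative
           laguerre_term i (Suc m) a k t - (if k < i then laguerre_term i (Suc m) a (Suc k) t else 0)) (at t)"
proof -
  let ?f = "laguerre_fun (m - k) (a + 1 + real k)"
  have "(?f has_real_derivative laguerre_fun (Suc m - k) (a + real k) t) (at t)"
    using laguerre_fun_has_derivative[OF t, of "m - k" "a + real k"] \<open>k \<le> m\<close>
    by (simp add: Suc_diff_le add_ac)
  from DERIV_cmult[OF DERIV_power_over_fact_mult[OF this, of "i - k"], of "(-1)^k"]
  have "((\<lambda>s. (-1)^k * (s^(i - k) / fact (i - k) * ?f s)) has_real_derivative
      laguerre_term i (Suc m) a k t
      + (-1)^k * (if i - k = 0 then 0 else t^(i - k - 1) / fact (i - k - 1) * ?f t)) (at t)"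
    by (simp add: laguerre_term_def algebra_simps)
  moreover have "(-1)^k * (if i - k = 0 then 0 else t^(i - k - 1) / fact (i - k - 1) * ?f t)
               = - (if k < i then laguerre_term i (Suc m) a (Suc k) t else 0)"
    by (auto simp: laguerre_term_def add_ac)
  ultimately show ?thesis
    by (simp add: laguerre_term_def[abs_def] mult_ac)
qed

theorem lemma2p2:
  fixes \<alpha> :: real and n i :: nat
  assumes "\<forall>m::nat. \<alpha> \<noteq> - real (Suc m)"
    and "n \<ge> 1" and "i \<le> n - 1"
  shows "\<forall>t>0. ((\<lambda>s. \<Sum>k=0..i. (-1)^k / fact (i - k) * s^(i - k)
                         * laguerre_fun (n - 1 - k) (\<alpha> + 1 + real k) s)
           has_real_derivative (t^i / fact i * laguerre_fun n \<alpha> t)) (at t)"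
proof (intro allI impI)
  fix t :: real assume "t > 0"
  let ?T = "\<lambda>k. laguerre_term i n \<alpha> k t"
  have n: "Suc (n - 1) = n" using assms(2) by simp
  have "(laguerre_term i (n - 1) (\<alpha> + 1) k has_real_derivative
                ?T k - (if k < i then ?T (Suc k) else 0)) (at t)" if "k \<le> i" for k
    using laguerre_term_has_derivative[OF \<open>t > 0\<close>, of k "n - 1" i \<alpha>, unfolded n] that assms(3)
    by simp
  then have "((\<lambda>s. \<Sum>k=0..i. laguerre_term i (n - 1) (\<alpha> + 1) k s) has_real_derivative
          (\<Sum>k=0..i. ?T k - (if k < i then ?T (Suc k) else 0))) (at t)"
    by (intro DERIV_sum) simp
  moreover have "(\<Sum>k=0..i. ?T k - (if k < i then ?T (Suc k) else 0)) = ?T 0"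
    using sum_lessThan_telescope'[of ?T i]
    by (simp add: atLeast0AtMost flip: lessThan_Suc_atMost)
  ultimately show "((\<lambda>s. \<Sum>k=0..i. (-1)^k / fact (i - k) * s^(i - k)
                         * laguerre_fun (n - 1 - k) (\<alpha> + 1 + real k) s)
           has_real_derivative (t^i / fact i * laguerre_fun n \<alpha> t)) (at t)"
    by (simp add: laguerre_term_def)
qed

end
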